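(* Let $q$ be a prime power, $n\ge 2$, $\lambda$ a nontrivial additive character of $\mathbb{F}_q$, and $x\in\mathbb{F}_q^*$. Then \[ q^{\binom n2}\sum_{\alpha_1,\ldots,\alpha_{n-1}\in\mathbb{F}_q^*}\lambda\!\left(\alpha_1+\cdots+\alpha_{n-1}+\frac{x}{\alpha_1\cdots\alpha_{n-1}}\right) = \sum_{\substack{g\in GL(n,q)\\ \det g = x}}\lambda(\operatorname{tr} g). \]
   Context: $GL(n,q)$ is the group of invertible $n\times n$ matrices over $\mathbb{F}_q$. *)

theory Defs
  imports Complex_Main "HOL-Library.FuncSet" "Jordan_Normal_Form.Determinant"
begin

definition additive_character :: "('a::field \<Rightarrow> complex) \<Rightarrow> bool" where
  "additive_character chi \<longleftrightarrow> (\<forall>a. chi a \<noteq> 0) \<and> (\<forall>a b. chi (a + b) = chi a * chi b)"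

definition nontrivial_character :: "('a::field \<Rightarrow> complex) \<Rightarrow> bool" where
  "nontrivial_character chi \<longleftrightarrow> (\<exists>a. chi a \<noteq> 1)"

definition mat_trace :: "'a::comm_ring_1 mat \<Rightarrow> 'a" where
  "mat_trace A = (\<Sum>i<dim_row A. A $$ (i, i))"

end

theory Submission
  imports Defs
begin

text \<open>Let S(n, x) be the sum of \<lambda>(tr g) over all n \<times> n matrices g with det g = x;
for x \<noteq> 0 these are exactly the g \<in> GL(n, q) with det g = x. Write g = [[A, b], [c, d]]
with A of size n - 1. Expanding along the last row gives det g = det g' + d det A, where g'
is g with d replaced by 0. If A is singular, det g does not depend on d, and the sum of
\<lambda>(d) over all d vanishes. If A is invertible, d is determined by det g = x, and the
Schur complement gives det g' = - det A (c A^-1 b); the sum of \<lambda>(c A^-1 b) over all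
rows c is q^(n-1) for b = 0 and 0 otherwise. Hence
  S(n, x) = q^(n-1) \<Sum>y\<noteq>0. \<lambda>(x/y) S(n-1, y).
Up to the factor q^(n-1) this is the recursion Kl(m+1, x) = \<Sum>y\<noteq>0. \<lambda>(x/y) Kl(m, y)
of the Kloosterman sums, and S(1, x) = \<lambda>(x) = Kl(0, x).\<close>

section \<open>Sums of additive characters\<close>

lemma additive_character_add:
  "additive_character chi \<Longrightarrow> chi (a + b) = chi a * chi b"
  unfolding additive_character_def by blast

lemma additive_character_zero: "additive_character chi \<Longrightarrow> chi 0 = 1"
  unfolding additive_character_def by (metis add.right_neutral mult_cancel_left2)

lemma additive_character_sum:
  assumes "additive_character chi"
  shows "chi (\<Sum>i\<in>I. f i) = (\<Prod>i\<in>I. chi (f i))"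
proof (cases "finite I")
  case True
  then show ?thesis
    by (induction I rule: finite_induct)
       (simp_all add: additive_character_zero[OF assms] additive_character_add[OF assms])
qed (simp add: additive_character_zero[OF assms])

lemma sum_additive_character_eq_0:
  fixes chi :: "'a::{field,finite} \<Rightarrow> complex"
  assumes "additive_character chi" and "nontrivial_character chi"
  shows "(\<Sum>t\<in>UNIV. chi t) = 0"
proof -
  obtain a where a: "chi a \<noteq> 1"
    using assms(2) unfolding nontrivial_character_def by blast
  have "(\<Sum>t\<in>UNIV. chi t) = (\<Sum>t\<in>UNIV. chi (t + a))"
    by (rule sum.reindex_bij_witness[where i = "\<lambda>t. t + a" and j = "\<lambda>t. t - a"]) auto
  also have "\<dots> = chi a * (\<Sum>t\<in>UNIV. chi t)"
    by (simp add: additive_character_add[OF assms(1)] sum_distrib_left mult.commute)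
  finally have "(1 - chi a) * (\<Sum>t\<in>UNIV. chi t) = 0"
    by (simp add: algebra_simps)
  with a show ?thesis by simp
qed

lemma sum_additive_character_scaled:
  fixes chi :: "'a::{field,finite} \<Rightarrow> complex"
  assumes "additive_character chi" and "nontrivial_character chi"
  shows "(\<Sum>t\<in>UNIV. chi (t * v)) = (if v = 0 then of_nat (card (UNIV :: 'a set)) else 0)"
proof (cases "v = 0")
  case True
  then show ?thesis by (simp add: additive_character_zero[OF assms(1)])
next
  case False
  have "(\<Sum>t\<in>UNIV. chi (t * v)) = (\<Sum>t\<in>UNIV. chi t)"
    by (rule sum.reindex_bij_witness[where i = "\<lambda>t. t / v" and j = "\<lambda>t. t * v"])
       (use False in auto)
  with False show ?thesis using sum_additive_character_eq_0[OF assms] by simp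
qed

lemma sum_additive_character_linear_form:
  fixes chi :: "'a::{field,finite} \<Rightarrow> complex"
  assumes "additive_character chi" and "nontrivial_character chi" and "finite I"
  shows "(\<Sum>c\<in>Pi\<^sub>E I (\<lambda>_. UNIV). chi (\<Sum>j\<in>I. c j * v j))
       = (if \<forall>j\<in>I. v j = 0 then of_nat (card (UNIV :: 'a set) ^ card I) else 0)"
proof -
  have "(\<Sum>c\<in>Pi\<^sub>E I (\<lambda>_. UNIV). chi (\<Sum>j\<in>I. c j * v j))
      = (\<Prod>j\<in>I. \<Sum>t\<in>UNIV. chi (t * v j))"
    by (simp add: additive_character_sum[OF assms(1)] prod_sum_PiE[OF assms(3)])
  also have "\<dots> = (\<Prod>j\<in>I. if v j = 0 then of_nat (card (UNIV :: 'a set)) else 0)"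
    by (simp add: sum_additive_character_scaled[OF assms(1,2)])
  also have "\<dots> = (if \<forall>j\<in>I. v j = 0 then of_nat (card (UNIV :: 'a set) ^ card I) else 0)"
    using assms(3) by (auto intro: prod_zero)
  finally show ?thesis .
qed

lemma bij_betw_vec: "bij_betw (vec n) (Pi\<^sub>E {..<n} (\<lambda>_. UNIV)) (carrier_vec n)"
proof (rule bij_betw_byWitness[where f' = "\<lambda>v. \<lambda>i\<in>{..<n}. v $ i"])
  show "\<forall>f\<in>Pi\<^sub>E {..<n} (\<lambda>_. UNIV). (\<lambda>i\<in>{..<n}. vec n f $ i) = f"
    by (auto simp: PiE_iff extensional_def fun_eq_iff)
  show "(\<lambda>v. \<lambda>i\<in>{..<n}. v $ i) ` carrier_vec n \<subseteq> Pi\<^sub>E {..<n} (\<lambda>_. UNIV)"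
    by (simp add: image_subset_iff)
qed (auto intro!: eq_vecI)

lemma finite_carrier_vec: "finite (carrier_vec n :: 'a::finite vec set)"
proof -
  have "finite (Pi\<^sub>E {..<n} (\<lambda>_. UNIV :: 'a set))"
    by (simp add: finite_PiE)
  then show ?thesis
    using bij_betw_finite[OF bij_betw_vec] by blast
qed

lemma sum_additive_character_scalar_prod:
  fixes chi :: "'a::{field,finite} \<Rightarrow> complex"
  assumes "additive_character chi" and "nontrivial_character chi" and w: "w \<in> carrier_vec n"
  shows "(\<Sum>c\<in>carrier_vec n. chi (c \<bullet> w))
       = (if w = 0\<^sub>v n then of_nat (card (UNIV :: 'a set) ^ n) else 0)"
proof -
  have "(\<Sum>c\<in>carrier_vec n. chi (c \<bullet> w))
      = (\<Sum>f\<in>Pi\<^sub>E {..<n} (\<lambda>_. UNIV). chi (vec n f \<bullet> w))"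
    by (rule sum.reindex_bij_betw[OF bij_betw_vec, symmetric])
  also have "\<dots> = (\<Sum>f\<in>Pi\<^sub>E {..<n} (\<lambda>_. UNIV). chi (\<Sum>j<n. f j * w $ j))"
    using w by (intro sum.cong refl) (simp add: scalar_prod_def atLeast0LessThan)
  also have "\<dots> = (if \<forall>j<n. w $ j = 0 then of_nat (card (UNIV :: 'a set) ^ n) else 0)"
    by (simp add: sum_additive_character_linear_form[OF assms(1,2)])
  also have "(\<forall>j<n. w $ j = 0) \<longleftrightarrow> w = 0\<^sub>v n"
    using w by auto
  finally show ?thesis .
qed

section \<open>Matrices and bordered matrices\<close>

lemma finite_carrier_mat: "finite (carrier_mat n m :: 'a::finite mat set)"
proof (rule finite_subset)
  show "carrier_mat n m \<subseteq> mat n m ` Pi\<^sub>E ({..<n} \<times> {..<m}) (\<lambda>_. UNIV :: 'a set)"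
  proof
    fix A :: "'a mat"
    assume "A \<in> carrier_mat n m"
    show "A \<in> mat n m ` Pi\<^sub>E ({..<n} \<times> {..<m}) (\<lambda>_. UNIV)"
    proof (rule image_eqI)
      show "A = mat n m (restrict (($$) A) ({..<n} \<times> {..<m}))"
        using \<open>A \<in> carrier_mat n m\<close> by (intro eq_matI) auto
    qed simp
  qed
qed (simp add: finite_PiE)

lemma det_nonzero_imp_inverse_mat:
  fixes A :: "'a::field mat"
  assumes "A \<in> carrier_mat n n" and "det A \<noteq> 0"
  obtains B where "B \<in> carrier_mat n n" and "A * B = 1\<^sub>m n" and "B * A = 1\<^sub>m n"
  using det_non_zero_imp_unit[OF assms, of undefined] that
  by (auto simp: Units_def ring_mat_def)

lemma det_nonzero_imp_invertible_mat:
  fixes A :: "'a::field mat"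
  assumes "A \<in> carrier_mat n n" and "det A \<noteq> 0"
  shows "invertible_mat A"
proof -
  obtain B where "B \<in> carrier_mat n n" "A * B = 1\<^sub>m n" "B * A = 1\<^sub>m n"
    using det_nonzero_imp_inverse_mat[OF assms] .
  with assms(1) show ?thesis
    by (auto simp: invertible_mat_def inverts_mat_def square_mat.simps)
qed

definition bordered_mat :: "'a mat \<Rightarrow> 'a vec \<Rightarrow> 'a vec \<Rightarrow> 'a \<Rightarrow> 'a mat" where
  "bordered_mat A b c d = mat (Suc (dim_row A)) (Suc (dim_col A)) (\<lambda>(i, j).
     if i < dim_row A then if j < dim_col A then A $$ (i, j) else b $ i
     else if j < dim_col A then c $ j else d)"

lemma dim_bordered_mat [simp]:
  "dim_row (bordered_mat A b c d) = Suc (dim_row A)"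
  "dim_col (bordered_mat A b c d) = Suc (dim_col A)"
  by (simp_all add: bordered_mat_def)

lemma bordered_mat_carrier [simp]:
  "A \<in> carrier_mat n n \<Longrightarrow> bordered_mat A b c d \<in> carrier_mat (Suc n) (Suc n)"
  by (auto intro!: carrier_matI)

lemma index_bordered_mat [simp]:
  assumes "i < Suc (dim_row A)" and "j < Suc (dim_col A)"
  shows "bordered_mat A b c d $$ (i, j) =
    (if i < dim_row A then if j < dim_col A then A $$ (i, j) else b $ i
     else if j < dim_col A then c $ j else d)"
  using assms by (simp add: bordered_mat_def)

lemma transpose_bordered_mat:
  "transpose_mat (bordered_mat A b c d) = bordered_mat (transpose_mat A) c b d"
  by (intro eq_matI) (auto simp: bordered_mat_def)

lemma mat_trace_bordered_mat:
  assumes "A \<in> carrier_mat n n"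
  shows "mat_trace (bordered_mat A b c d) = mat_trace A + d"
  using assms by (simp add: mat_trace_def)

lemma bij_betw_bordered_mat:
  "bij_betw (\<lambda>(A, b, c, d). bordered_mat A b c d)
     (carrier_mat n n \<times> carrier_vec n \<times> carrier_vec n \<times> UNIV) (carrier_mat (Suc n) (Suc n))"
proof (rule bij_betw_byWitness[where f' = "\<lambda>g. (mat n n (($$) g),
    vec n (\<lambda>i. g $$ (i, n)), vec n (\<lambda>j. g $$ (n, j)), g $$ (n, n))"])
  show "\<forall>g\<in>carrier_mat (Suc n) (Suc n). (\<lambda>(A, b, c, d). bordered_mat A b c d)
      (mat n n (($$) g), vec n (\<lambda>i. g $$ (i, n)), vec n (\<lambda>j. g $$ (n, j)), g $$ (n, n)) = g"
    by (auto intro!: eq_matI simp: less_Suc_eq)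
qed (auto intro!: eq_matI eq_vecI)

lemma det_bordered_mat_affine:
  fixes A :: "'a::comm_ring_1 mat"
  assumes A: "A \<in> carrier_mat n n"
  shows "det (bordered_mat A b c d) = det (bordered_mat A b c 0) + d * det A"
proof -
  let ?g = "\<lambda>e. bordered_mat A b c e"
  have delete_last_row: "mat_delete (?g e) n j = mat_delete (?g 0) n j" for e j
    using A by (intro eq_matI) (auto simp: mat_delete_def)
  have delete_corner: "mat_delete (?g e) n n = A" for e
    using A by (intro eq_matI) (auto simp: mat_delete_def)
  have sign: "(-1::'a) ^ (n + n) = 1"
    by (simp add: mult_2[symmetric])
  have expand: "det (?g e) = (\<Sum>j<n. c $ j * cofactor (?g 0) n j) + e * det A" for e
  proof -
    have "det (?g e) = (\<Sum>j<Suc n. ?g e $$ (n, j) * cofactor (?g e) n j)"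
      using A by (intro laplace_expansion_row) auto
    also have "\<dots> = (\<Sum>j<n. c $ j * cofactor (?g 0) n j) + e * det A"
      using A by (simp add: cofactor_def delete_last_row[of e] delete_corner sign)
    finally show ?thesis .
  qed
  have "det (?g 0) = (\<Sum>j<n. c $ j * cofactor (?g 0) n j)"
    using expand[of 0] by simp
  with expand[of d] show ?thesis
    by simp
qed

lemma det_bordered_mat_zero_row:
  fixes A :: "'a::comm_ring_1 mat"
  assumes A: "A \<in> carrier_mat n n"
  shows "det (bordered_mat A b (0\<^sub>v n) d) = d * det A"
proof -
  let ?g = "bordered_mat A b (0\<^sub>v n) 0"
  have "det ?g = (\<Sum>j<Suc n. ?g $$ (n, j) * cofactor ?g n j)"
    using A by (intro laplace_expansion_row) auto
  also have "\<dots> = 0"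
    using A by simp
  finally show ?thesis
    using det_bordered_mat_affine[OF A, of b "0\<^sub>v n" d] by simp
qed

lemma det_bordered_mat_zero_col:
  fixes A :: "'a::comm_ring_1 mat"
  assumes A: "A \<in> carrier_mat n n"
  shows "det (bordered_mat A (0\<^sub>v n) c d) = d * det A"
proof -
  have "det (bordered_mat A (0\<^sub>v n) c d) = det (bordered_mat (transpose_mat A) c (0\<^sub>v n) d)"
    using det_transpose[of "bordered_mat A (0\<^sub>v n) c d" "Suc n"] A
    by (simp add: transpose_bordered_mat)
  also have "\<dots> = d * det A"
    using A by (simp add: det_bordered_mat_zero_row det_transpose)
  finally show ?thesis .
qed

lemma det_bordered_mat_Schur_complement:
  fixes A :: "'a::comm_ring_1 mat"
  assumes A: "A \<in> carrier_mat n n" and w: "w \<in> carrier_vec n" and b: "A *\<^sub>v w = b"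
  shows "det (bordered_mat A b c 0) = - det A * (c \<bullet> w)"
proof -
  let ?g = "bordered_mat A b c 0"
  let ?N = "bordered_mat (1\<^sub>m n) (- w) (0\<^sub>v n) 1"
  have "?g * ?N = bordered_mat A (0\<^sub>v n) c (- (c \<bullet> w))"
  proof (rule eq_matI)
    fix i j
    assume "i < dim_row (bordered_mat A (0\<^sub>v n) c (- (c \<bullet> w)))"
      and "j < dim_col (bordered_mat A (0\<^sub>v n) c (- (c \<bullet> w)))"
    then have i: "i < Suc n" and j: "j < Suc n"
      using A by auto
    have "(?g * ?N) $$ (i, j) = (\<Sum>k<n. ?g $$ (i, k) * ?N $$ (k, j)) + ?g $$ (i, n) * ?N $$ (n, j)"
      using A i j by (simp add: scalar_prod_def atLeast0LessThan)
    also have "\<dots> = bordered_mat A (0\<^sub>v n) c (- (c \<bullet> w)) $$ (i, j)"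
    proof (cases "j < n")
      case True
      have "(\<Sum>k<n. ?g $$ (i, k) * ?N $$ (k, j)) = (\<Sum>k<n. if k = j then ?g $$ (i, k) else 0)"
        using A i True by (intro sum.cong refl) auto
      with True show ?thesis
        using A i by simp
    next
      case False
      with j have j_n: "j = n"
        by simp
      have row_w: "(\<Sum>k<n. A $$ (i, k) * w $ k) = b $ i" if "i < n"
        using A w that by (simp flip: b add: scalar_prod_def atLeast0LessThan)
      have "c \<bullet> w = (\<Sum>k<n. c $ k * w $ k)"
        using w by (simp add: scalar_prod_def atLeast0LessThan)
      then show ?thesis
        using A w i j_n row_w by (cases "i < n") (simp_all add: sum_negf)
    qed
    finally show "(?g * ?N) $$ (i, j) = bordered_mat A (0\<^sub>v n) c (- (c \<bullet> w)) $$ (i, j)" .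
  qed (use A in auto)
  then have "det ?g * det ?N = - (c \<bullet> w) * det A"
    using det_mult[of ?g "Suc n" ?N] A det_bordered_mat_zero_col[OF A] by simp
  moreover have "det ?N = 1"
    using det_bordered_mat_zero_row[of "1\<^sub>m n" n] by simp
  ultimately show ?thesis
    by simp
qed

section \<open>Trace sums over a determinant class\<close>

definition det_trace_sum :: "('a::field \<Rightarrow> complex) \<Rightarrow> nat \<Rightarrow> 'a \<Rightarrow> complex" where
  "det_trace_sum chi n x = (\<Sum>g\<in>carrier_mat n n. if det g = x then chi (mat_trace g) else 0)"

lemma det_trace_sum_0:
  assumes "additive_character chi"
  shows "det_trace_sum chi 0 x = (if x = 1 then 1 else 0)"
proof -
  have "carrier_mat 0 0 = {1\<^sub>m 0 :: 'a mat}"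
    by (auto intro!: eq_matI)
  then show ?thesis
    by (simp add: det_trace_sum_def mat_trace_def additive_character_zero[OF assms])
qed

lemma sum_bordered_mat_singular:
  fixes chi :: "'a::{field,finite} \<Rightarrow> complex"
  assumes chi: "additive_character chi" "nontrivial_character chi"
    and A: "A \<in> carrier_mat n n" and "det A = 0"
  shows "(\<Sum>d\<in>UNIV. if det (bordered_mat A b c d) = x
            then chi (mat_trace (bordered_mat A b c d)) else 0) = 0"
proof -
  define \<delta> where "\<delta> = det (bordered_mat A b c 0)"
  have "det (bordered_mat A b c d) = \<delta>" for d
    using det_bordered_mat_affine[OF A, of b c d] \<open>det A = 0\<close> by (simp add: \<delta>_def)
  then show ?thesis
    using A sum_additive_character_eq_0[OF chi]
    by (cases "\<delta> = x")
       (simp_all add: mat_trace_bordered_mat additive_character_add[OF chi(1)]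
         flip: sum_distrib_left)
qed

lemma sum_bordered_mat_invertible:
  fixes chi :: "'a::{field,finite} \<Rightarrow> complex"
  assumes chi: "additive_character chi" "nontrivial_character chi"
    and A: "A \<in> carrier_mat n n" and detA: "det A \<noteq> 0"
  shows "(\<Sum>b\<in>carrier_vec n. \<Sum>c\<in>carrier_vec n. \<Sum>d\<in>UNIV.
            if det (bordered_mat A b c d) = x then chi (mat_trace (bordered_mat A b c d)) else 0)
       = of_nat (card (UNIV :: 'a set) ^ n) * chi (mat_trace A + x / det A)"
proof -
  obtain B where B: "B \<in> carrier_mat n n" and AB: "A * B = 1\<^sub>m n"
    using det_nonzero_imp_inverse_mat[OF A detA] by blast
  let ?K = "chi (mat_trace A + x / det A)"
  let ?q = "of_nat (card (UNIV :: 'a set) ^ n) :: complex"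
  have A_B: "A *\<^sub>v (B *\<^sub>v b) = b" if "b \<in> carrier_vec n" for b
    using A B AB that by (simp flip: assoc_mult_mat_vec)
  have sum_d: "(\<Sum>d\<in>UNIV. if det (bordered_mat A b c d) = x
                  then chi (mat_trace (bordered_mat A b c d)) else 0)
      = ?K * chi (c \<bullet> (B *\<^sub>v b))" if b: "b \<in> carrier_vec n" for b c
  proof -
    let ?s = "c \<bullet> (B *\<^sub>v b)"
    have det_eq: "det (bordered_mat A b c d) = det A * (d - ?s)" for d
      using det_bordered_mat_affine[OF A, of b c d]
        det_bordered_mat_Schur_complement[OF A mult_mat_vec_carrier[OF B b] A_B[OF b]]
      by (simp add: algebra_simps)
    have "det (bordered_mat A b c d) = x \<longleftrightarrow> d = ?s + x / det A" for d
      using detA by (simp add: det_eq field_simps)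
    then have "(\<Sum>d\<in>UNIV. if det (bordered_mat A b c d) = x
                  then chi (mat_trace (bordered_mat A b c d)) else 0)
        = (\<Sum>d\<in>UNIV. if d = ?s + x / det A then chi (mat_trace A + d) else 0)"
      using A by (simp add: mat_trace_bordered_mat)
    also have "\<dots> = ?K * chi ?s"
      by (simp add: additive_character_add[OF chi(1)] ac_simps)
    finally show ?thesis .
  qed
  have kernel: "B *\<^sub>v b = 0\<^sub>v n \<longleftrightarrow> b = 0\<^sub>v n" if "b \<in> carrier_vec n" for b
  proof
    assume "B *\<^sub>v b = 0\<^sub>v n"
    then show "b = 0\<^sub>v n"
      using A_B[OF that] A by (auto intro!: eq_vecI)
  qed (use B in \<open>auto intro!: eq_vecI\<close>)
  have "(\<Sum>b\<in>carrier_vec n. \<Sum>c\<in>carrier_vec n. \<Sum>d\<in>UNIV.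
            if det (bordered_mat A b c d) = x then chi (mat_trace (bordered_mat A b c d)) else 0)
      = (\<Sum>b\<in>carrier_vec n. if b = (0\<^sub>v n :: 'a vec) then ?K * ?q else 0)"
  proof (rule sum.cong[OF refl])
    fix b :: "'a vec"
    assume b: "b \<in> carrier_vec n"
    then have "B *\<^sub>v b \<in> carrier_vec n"
      using B by simp
    with b show "(\<Sum>c\<in>carrier_vec n. \<Sum>d\<in>UNIV.
            if det (bordered_mat A b c d) = x then chi (mat_trace (bordered_mat A b c d)) else 0)
        = (if b = 0\<^sub>v n then ?K * ?q else 0)"
      by (simp add: sum_d sum_additive_character_scalar_prod[OF chi] kernel
          flip: sum_distrib_left)
  qed
  also have "\<dots> = ?K * ?q"
    by (simp add: finite_carrier_vec)
  finally show ?thesis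
    by (simp add: mult.commute)
qed

lemma det_trace_sum_Suc:
  fixes chi :: "'a::{field,finite} \<Rightarrow> complex"
  assumes chi: "additive_character chi" "nontrivial_character chi"
  shows "det_trace_sum chi (Suc n) x
       = of_nat (card (UNIV :: 'a set) ^ n) * (\<Sum>y\<in>UNIV - {0}. chi (x / y) * det_trace_sum chi n y)"
proof -
  let ?q = "of_nat (card (UNIV :: 'a set) ^ n) :: complex"
  let ?S = "\<lambda>g. if det g = x then chi (mat_trace g) else 0"
  have "det_trace_sum chi (Suc n) x
      = (\<Sum>A\<in>carrier_mat n n. \<Sum>b\<in>carrier_vec n. \<Sum>c\<in>carrier_vec n. \<Sum>d\<in>UNIV.
           ?S (bordered_mat A b c d))"
    unfolding det_trace_sum_def
    by (simp add: sum.reindex_bij_betw[OF bij_betw_bordered_mat, symmetric] sum.cartesian_product'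
        cong: if_cong)
  also have "\<dots> = (\<Sum>A\<in>carrier_mat n n. if det A = 0 then 0 else ?q * chi (mat_trace A + x / det A))"
    using sum_bordered_mat_singular[OF chi] sum_bordered_mat_invertible[OF chi]
    by (intro sum.cong refl) simp
  also have "\<dots> = (\<Sum>A\<in>carrier_mat n n. ?q * (\<Sum>y\<in>UNIV - {0}.
                    if det A = y then chi (x / y) * chi (mat_trace A) else 0))"
    by (intro sum.cong refl) (simp add: additive_character_add[OF chi(1)] mult.commute)
  also have "\<dots> = ?q * (\<Sum>y\<in>UNIV - {0}. chi (x / y) * det_trace_sum chi n y)"
    unfolding det_trace_sum_def sum_distrib_left
    by (rule trans[OF _ sum.swap]) (intro sum.cong refl, simp)
  finally show ?thesis .
qed

section \<open>Kloosterman sums\<close>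

definition kloosterman_sum :: "('a::field \<Rightarrow> complex) \<Rightarrow> nat \<Rightarrow> 'a \<Rightarrow> complex" where
  "kloosterman_sum chi m x =
     (\<Sum>\<alpha>\<in>Pi\<^sub>E {..<m} (\<lambda>_. UNIV - {0}). chi ((\<Sum>i<m. \<alpha> i) + x / (\<Prod>i<m. \<alpha> i)))"

lemma kloosterman_sum_0: "kloosterman_sum chi 0 x = chi x"
  by (simp add: kloosterman_sum_def)

lemma kloosterman_sum_Suc:
  fixes chi :: "'a::{field,finite} \<Rightarrow> complex"
  assumes chi: "additive_character chi"
  shows "kloosterman_sum chi (Suc m) x = (\<Sum>y\<in>UNIV - {0}. chi (x / y) * kloosterman_sum chi m y)"
proof -
  let ?T = "\<lambda>_::nat. UNIV - {0::'a}"
  let ?F = "\<lambda>\<alpha>. chi ((\<Sum>i<Suc m. \<alpha> i) + x / (\<Prod>i<Suc m. \<alpha> i))"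
  let ?h = "\<lambda>(z, \<alpha>::nat \<Rightarrow> 'a). \<alpha>(m := z)"
  have dom: "Pi\<^sub>E {..<Suc m} ?T = ?h ` (?T m \<times> Pi\<^sub>E {..<m} ?T)"
    by (simp add: lessThan_Suc PiE_insert_eq)
  have update: "(\<Sum>i<m. (\<alpha>(m := z)) i) = (\<Sum>i<m. \<alpha> i)"
      "(\<Prod>i<m. (\<alpha>(m := z)) i) = (\<Prod>i<m. \<alpha> i)"
    for \<alpha> :: "nat \<Rightarrow> 'a" and z
    by (auto intro!: sum.cong prod.cong)
  have "kloosterman_sum chi (Suc m) x = sum ?F (?h ` (?T m \<times> Pi\<^sub>E {..<m} ?T))"
    unfolding kloosterman_sum_def dom ..
  also have "\<dots> = (\<Sum>p\<in>?T m \<times> Pi\<^sub>E {..<m} ?T. ?F (?h p))"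
    by (rule sum.reindex[OF inj_combinator, unfolded comp_def]) simp
  also have "\<dots> = (\<Sum>z\<in>UNIV - {0}. \<Sum>\<alpha>\<in>Pi\<^sub>E {..<m} ?T.
                    chi ((\<Sum>i<m. \<alpha> i) + z + x / ((\<Prod>i<m. \<alpha> i) * z)))"
    by (simp add: sum.cartesian_product' update fun_upd_same del: fun_upd_apply)
  also have "\<dots> = (\<Sum>\<alpha>\<in>Pi\<^sub>E {..<m} ?T. \<Sum>y\<in>UNIV - {0}.
                    chi (x / y) * chi ((\<Sum>i<m. \<alpha> i) + y / (\<Prod>i<m. \<alpha> i)))"
  proof (rule trans[OF sum.swap], rule sum.cong[OF refl])
    fix \<alpha> assume "\<alpha> \<in> Pi\<^sub>E {..<m} ?T"
    then have P: "(\<Prod>i<m. \<alpha> i) \<noteq> 0"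
      by (auto simp: PiE_iff)
    show "(\<Sum>z\<in>UNIV - {0}. chi ((\<Sum>i<m. \<alpha> i) + z + x / ((\<Prod>i<m. \<alpha> i) * z)))
        = (\<Sum>y\<in>UNIV - {0}. chi (x / y) * chi ((\<Sum>i<m. \<alpha> i) + y / (\<Prod>i<m. \<alpha> i)))"
      by (rule sum.reindex_bij_witness[where i = "\<lambda>y. y / (\<Prod>i<m. \<alpha> i)"
            and j = "\<lambda>z. z * (\<Prod>i<m. \<alpha> i)"])
         (use P in \<open>auto simp: additive_character_add[OF chi] ac_simps\<close>)
  qed
  also have "\<dots> = (\<Sum>y\<in>UNIV - {0}. chi (x / y) * kloosterman_sum chi m y)"
    unfolding kloosterman_sum_def sum_distrib_left by (rule sum.swap)
  finally show ?thesis .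
qed

lemma det_trace_sum_eq_kloosterman_sum:
  fixes chi :: "'a::{field,finite} \<Rightarrow> complex"
  assumes chi: "additive_character chi" "nontrivial_character chi"
  shows "det_trace_sum chi (Suc m) x
       = of_nat (card (UNIV :: 'a set) ^ (Suc m choose 2)) * kloosterman_sum chi m x"
proof (induction m arbitrary: x)
  case 0
  have "det_trace_sum chi (Suc 0) x = (\<Sum>y\<in>UNIV - {0}. chi (x / y) * (if y = 1 then 1 else 0))"
    by (simp add: det_trace_sum_Suc[OF chi] det_trace_sum_0[OF chi(1)])
  also have "\<dots> = (\<Sum>y\<in>UNIV - {0}. if y = 1 then chi (x / y) else 0)"
    by (intro sum.cong) auto
  finally show ?case
    by (simp add: kloosterman_sum_0 numeral_2_eq_2)
next
  case (Suc m)
  let ?q = "of_nat (card (UNIV :: 'a set)) :: complex"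
  have "det_trace_sum chi (Suc (Suc m)) x
      = ?q ^ Suc m * (\<Sum>y\<in>UNIV - {0}. chi (x / y) * (?q ^ (Suc m choose 2) * kloosterman_sum chi m y))"
    by (simp add: det_trace_sum_Suc[OF chi, of "Suc m"] Suc.IH)
  also have "\<dots> = ?q ^ (Suc m + (Suc m choose 2)) * kloosterman_sum chi (Suc m) x"
    by (simp add: kloosterman_sum_Suc[OF chi(1)] sum_distrib_left power_add ac_simps)
  also have "Suc m + (Suc m choose 2) = Suc (Suc m) choose 2"
    by (simp add: numeral_2_eq_2)
  finally show ?case
    by simp
qed

theorem mainTheorem5:
  fixes chi :: "'a::{field,finite} \<Rightarrow> complex" and n :: nat and x :: 'a
  assumes "n \<ge> 2"
    and "additive_character chi" and "nontrivial_character chi"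
    and "x \<noteq> 0"
  shows "of_nat (card (UNIV :: 'a set) ^ (n choose 2)) *
           (\<Sum>\<alpha> \<in> Pi\<^sub>E {..<n-1} (\<lambda>_. UNIV - {0}).
              chi ((\<Sum>i<n-1. \<alpha> i) + x / (\<Prod>i<n-1. \<alpha> i)))
       = (\<Sum>g \<in> {g \<in> carrier_mat n n. invertible_mat g \<and> det g = x}. chi (mat_trace g))"
proof -
  obtain m where n: "n = Suc m"
    using assms(1) by (cases n) auto
  have "{g \<in> carrier_mat n n. invertible_mat g \<and> det g = x} = {g \<in> carrier_mat n n. det g = x}"
    using det_nonzero_imp_invertible_mat assms(4) by blast
  then have "(\<Sum>g \<in> {g \<in> carrier_mat n n. invertible_mat g \<and> det g = x}. chi (mat_trace g))
      = det_trace_sum chi n x"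
    by (simp add: det_trace_sum_def sum.inter_filter finite_carrier_mat)
  also have "\<dots> = of_nat (card (UNIV :: 'a set) ^ (n choose 2)) * kloosterman_sum chi (n - 1) x"
    using det_trace_sum_eq_kloosterman_sum[OF assms(2,3)] n by simp
  finally show ?thesis
    by (simp add: kloosterman_sum_def)
qed

end
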